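(* Repeatedly choose independent uniformly random breaking points in $[0,1]$, each new point further subdividing the current partition of $[0,1]$ into segments, and stop as soon as some three of the current segments can form a triangle. Let $X$ be the number of breaking points chosen. Then $\mathbb E[X] \le 3.398$.
   Context: Three lengths form a triangle iff each is less than the sum of the other two. *)

theory Defs
  imports "HOL-Probability.Probability"
begin

definition is_triangle :: "real \<Rightarrow> real \<Rightarrow> real \<Rightarrow> bool" where
  "is_triangle a b c \<longleftrightarrow> a < b + c \<and> b < a + c \<and> c < a + b"

definition seg_lengths :: "(nat \<Rightarrow> real) \<Rightarrow> nat \<Rightarrow> real list" where
  "seg_lengths \<omega> n =
     (let xs = sort (0 # 1 # map \<omega> [0..<n])
      in map (\<lambda>i. xs ! Suc i - xs ! i) [0..<Suc n])"

definition has_triangle :: "real list \<Rightarrow> bool" where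
  "has_triangle ls \<longleftrightarrow>
     (\<exists>i j k. i < length ls \<and> j < length ls \<and> k < length ls \<and>
              i \<noteq> j \<and> i \<noteq> k \<and> j \<noteq> k \<and> is_triangle (ls ! i) (ls ! j) (ls ! k))"

definition stop_time :: "(nat \<Rightarrow> real) \<Rightarrow> ennreal" where
  "stop_time \<omega> =
     (if \<exists>n. has_triangle (seg_lengths \<omega> n)
      then of_nat (LEAST n. has_triangle (seg_lengths \<omega> n)) else \<infinity>)"

definition break_space :: "(nat \<Rightarrow> real) measure" where
  "break_space = (\<Pi>\<^sub>M i\<in>(UNIV :: nat set). uniform_measure lborel {0..1::real})"

end

theory Submission
  imports Defs "HOL-Number_Theory.Fib"
begin

text \<open>\<open>E[X]\<close> is the sum over \<open>n\<close> of the probability that the first \<open>n\<close> points leave no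
  triangle. Then the sorted segment lengths \<open>l_0 \<le> ... \<le> l_n\<close> grow at least like the
  Fibonacci numbers: the excesses \<open>d_j = l_j - l_(j-1) - l_(j-2)\<close> are nonnegative, and
  \<open>l_0 + ... + l_n = 1\<close> becomes \<open>\<Sum>j. W (n - j) * d_j = 1\<close> with \<open>W m = F 1 + ... + F (m + 1)\<close>.
  For fixed orders of the points and of the segments these conditions describe a cone whose
  volume, by two triangular changes of variables (points to spacings to excesses), is
  \<open>1 / (n! * W 1 * ... * W n)\<close>. Summing over the \<open>n! * (n + 1)!\<close> pairs of orders bounds the
  probability by \<open>(n + 1)! / (W 1 * ... * W n)\<close>; for \<open>n = 3\<close> this is sharpened using that
  the first two points formed no triangle either. The resulting series is summed exactly
  up to \<open>n = 7\<close> and bounded by a geometric series beyond.\<close>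

abbreviation lborel_Pi :: "nat set \<Rightarrow> (nat \<Rightarrow> real) measure" where
  "lborel_Pi I \<equiv> Pi\<^sub>M I (\<lambda>_. lborel)"

section \<open>Triangular affine changes of variables\<close>

definition triangular_map :: "nat \<Rightarrow> (nat \<Rightarrow> nat) \<Rightarrow> (nat \<Rightarrow> real) \<Rightarrow> (nat \<Rightarrow> real)
    \<Rightarrow> (nat \<Rightarrow> nat \<Rightarrow> real) \<Rightarrow> (nat \<Rightarrow> real) \<Rightarrow> nat \<Rightarrow> real" where
  "triangular_map m \<tau> a b e x =
     (\<lambda>k\<in>{..<m}. a k * x (\<tau> k) + b k + (\<Sum>j<k. e k j * x (\<tau> j)))"

lemma triangular_map_measurable:
  assumes "\<tau> ` {..<m} \<subseteq> J"
  shows "triangular_map m \<tau> a b e \<in> measurable (lborel_Pi J) (lborel_Pi {..<m})"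
  unfolding triangular_map_def
proof (rule measurable_restrict)
  fix k assume "k \<in> {..<m}"
  then have J: "\<tau> j \<in> J" if "j \<le> k" for j
    using assms that by auto
  have "(\<lambda>x. x i) \<in> borel_measurable (lborel_Pi J)" if "i \<in> J" for i
    using measurable_component_singleton[OF that, of "\<lambda>_. lborel"] by simp
  then show "(\<lambda>x. a k * x (\<tau> k) + b k + (\<Sum>j<k. e k j * x (\<tau> j))) \<in> measurable (lborel_Pi J) lborel"
    unfolding measurable_lborel1 using J
    by (intro borel_measurable_add borel_measurable_sum borel_measurable_times borel_measurable_const) auto
qed

lemma borel_measurable_nn_integral_fun_upd:
  assumes "g \<in> borel_measurable (lborel_Pi (insert i I))"
  shows "(\<lambda>x. \<integral>\<^sup>+y. g (x(i := y)) \<partial>lborel) \<in> borel_measurable (lborel_Pi I)"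
proof -
  interpret lborel: sigma_finite_measure "lborel :: real measure" by standard
  have "(\<lambda>p. g ((fst p)(i := snd p))) \<in> borel_measurable (lborel_Pi I \<Otimes>\<^sub>M lborel)"
    using measurable_compose[OF measurable_add_dim assms] by (simp add: case_prod_beta')
  then show ?thesis
    using lborel.borel_measurable_nn_integral_fst by fastforce
qed

lemma triangular_map_Suc_fun_upd:
  assumes "\<And>k. k < m \<Longrightarrow> \<tau> k \<noteq> \<tau> m"
  shows "triangular_map (Suc m) \<tau> a b e (x(\<tau> m := y))
    = (triangular_map m \<tau> a b e x)(m := a m * y + b m + (\<Sum>j<m. e m j * x (\<tau> j)))"
proof
  fix k
  show "triangular_map (Suc m) \<tau> a b e (x(\<tau> m := y)) k
      = ((triangular_map m \<tau> a b e x)(m := a m * y + b m + (\<Sum>j<m. e m j * x (\<tau> j)))) k"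
  proof (cases "k < m")
    case True
    then have "(\<Sum>j<k. e k j * (x(\<tau> m := y)) (\<tau> j)) = (\<Sum>j<k. e k j * x (\<tau> j))"
      using assms by (intro sum.cong) auto
    with True assms show ?thesis
      by (simp add: triangular_map_def)
  next
    case False
    then show ?thesis
      using assms by (auto simp: triangular_map_def intro!: sum.cong)
  qed
qed

text \<open>By induction on \<open>m\<close>: the coordinate \<open>\<tau> m\<close> only enters the last component, so
  integrating it out is the one-dimensional substitution \<open>y \<mapsto> a m * y + c\<close>.\<close>

lemma nn_integral_triangular_map:
  fixes g :: "(nat \<Rightarrow> real) \<Rightarrow> ennreal"
  assumes "inj_on \<tau> {..<m}" and "\<And>k. k < m \<Longrightarrow> a k \<noteq> 0"
    and "g \<in> borel_measurable (lborel_Pi {..<m})"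
  shows "(\<integral>\<^sup>+x. g (triangular_map m \<tau> a b e x) \<partial>lborel_Pi (\<tau> ` {..<m})) * (\<Prod>k<m. ennreal \<bar>a k\<bar>)
         = (\<integral>\<^sup>+x. g x \<partial>lborel_Pi {..<m})"
  using assms
proof (induction m arbitrary: g)
  case 0
  interpret product_sigma_finite "\<lambda>_::nat. lborel::real measure" by standard
  show ?case by (simp add: PiM_empty nn_integral_count_space_finite triangular_map_def)
next
  case (Suc m)
  interpret product_sigma_finite "\<lambda>_::nat. lborel::real measure" by standard
  let ?T = "triangular_map (Suc m) \<tau> a b e" and ?T' = "triangular_map m \<tau> a b e"
  let ?I = "\<tau> ` {..<m}" and ?i = "\<tau> m"
  have ne: "\<tau> k \<noteq> \<tau> m" if "k < m" for k
    using Suc.prems(1) that by (auto simp: inj_on_def)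
  then have iI: "?i \<notin> ?I" by (metis imageE lessThan_iff)
  have ins: "\<tau> ` {..<Suc m} = insert ?i ?I" by (simp add: lessThan_Suc)
  define \<beta> where "\<beta> x = b m + (\<Sum>j<m. e m j * x (\<tau> j))" for x
  have upd: "?T (x(?i := y)) = (?T' x)(m := a m * y + \<beta> x)" for x y
    using triangular_map_Suc_fun_upd[of m \<tau>, OF ne] by (simp add: \<beta>_def add.assoc)
  have g: "g \<in> borel_measurable (lborel_Pi (insert m {..<m}))"
    using Suc.prems(3) by (simp add: lessThan_Suc)
  have Tg: "(\<lambda>x. g (?T x)) \<in> borel_measurable (lborel_Pi (insert ?i ?I))"
    using measurable_compose[OF triangular_map_measurable Suc.prems(3)] ins by auto
  define H where "H z = (\<integral>\<^sup>+y. g (z(m := y)) \<partial>lborel)" for z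
  have H: "H \<in> borel_measurable (lborel_Pi {..<m})"
    unfolding H_def using borel_measurable_nn_integral_fun_upd[OF g] .
  have inner: "(\<integral>\<^sup>+y. g (?T (x(?i := y))) \<partial>lborel) * ennreal \<bar>a m\<bar> = H (?T' x)"
    if "x \<in> space (lborel_Pi ?I)" for x
  proof -
    have "?T' x \<in> space (lborel_Pi {..<m})"
      using measurable_space[OF triangular_map_measurable that] by simp
    then have "(\<lambda>y. g ((?T' x)(m := y))) \<in> borel_measurable borel"
      using measurable_compose[OF measurable_component_update g] by (simp add: fun_upd_def)
    then have "H (?T' x) = ennreal \<bar>a m\<bar> * (\<integral>\<^sup>+y. g ((?T' x)(m := \<beta> x + a m * y)) \<partial>lborel)"
      unfolding H_def using Suc.prems(2) by (intro nn_integral_real_affine) auto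
    then show ?thesis
      by (simp add: upd add.commute mult.commute)
  qed
  have "(\<integral>\<^sup>+x. g (?T x) \<partial>lborel_Pi (\<tau> ` {..<Suc m})) * (\<Prod>k<Suc m. ennreal \<bar>a k\<bar>)
      = (\<integral>\<^sup>+x. (\<integral>\<^sup>+y. g (?T (x(?i := y))) \<partial>lborel) \<partial>lborel_Pi ?I)
          * ennreal \<bar>a m\<bar> * (\<Prod>k<m. ennreal \<bar>a k\<bar>)"
    unfolding ins by (subst product_nn_integral_insert[OF _ iI Tg]) (simp_all add: ac_simps)
  also have "\<dots> = (\<integral>\<^sup>+x. (\<integral>\<^sup>+y. g (?T (x(?i := y))) \<partial>lborel) * ennreal \<bar>a m\<bar> \<partial>lborel_Pi ?I)
          * (\<Prod>k<m. ennreal \<bar>a k\<bar>)"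
    by (subst nn_integral_multc[OF borel_measurable_nn_integral_fun_upd[OF Tg]]) simp
  also have "\<dots> = (\<integral>\<^sup>+x. H (?T' x) \<partial>lborel_Pi ?I) * (\<Prod>k<m. ennreal \<bar>a k\<bar>)"
    by (intro arg_cong2[where f="(*)"] nn_integral_cong inner) auto
  also have "\<dots> = (\<integral>\<^sup>+x. H x \<partial>lborel_Pi {..<m})"
    using Suc.IH[OF inj_on_subset[OF Suc.prems(1)] _ H] Suc.prems(2) by auto
  also have "\<dots> = (\<integral>\<^sup>+x. g x \<partial>lborel_Pi (insert m {..<m}))"
    unfolding H_def by (rule product_nn_integral_insert[symmetric]) (auto simp: g)
  finally show ?case by (simp add: lessThan_Suc)
qed

lemma emeasure_triangular_map_vimage:
  assumes "inj_on \<tau> {..<m}" and "\<tau> ` {..<m} \<subseteq> {..<m}" and "\<And>k. k < m \<Longrightarrow> a k \<noteq> 0"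
    and S: "S \<in> sets (lborel_Pi {..<m})"
  shows "emeasure (lborel_Pi {..<m}) (triangular_map m \<tau> a b e -` S \<inter> space (lborel_Pi {..<m}))
           * (\<Prod>k<m. ennreal \<bar>a k\<bar>) = emeasure (lborel_Pi {..<m}) S"
proof -
  let ?T = "triangular_map m \<tau> a b e"
  have \<tau>: "\<tau> ` {..<m} = {..<m}"
    using endo_inj_surj[OF _ assms(2,1)] by simp
  have T: "?T \<in> measurable (lborel_Pi {..<m}) (lborel_Pi {..<m})"
    using triangular_map_measurable[OF assms(2)] .
  have "emeasure (lborel_Pi {..<m}) (?T -` S \<inter> space (lborel_Pi {..<m}))
      = (\<integral>\<^sup>+x. indicator (?T -` S \<inter> space (lborel_Pi {..<m})) x \<partial>lborel_Pi {..<m})"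
    using measurable_sets[OF T S] by simp
  also have "\<dots> = (\<integral>\<^sup>+x. indicator S (?T x) \<partial>lborel_Pi {..<m})"
    by (intro nn_integral_cong) (simp split: split_indicator)
  finally show ?thesis
    using nn_integral_triangular_map[OF assms(1,3) borel_measurable_indicator[OF S]] \<tau> S by simp
qed

definition std_simplex :: "nat \<Rightarrow> (nat \<Rightarrow> real) set" where
  "std_simplex n = {x. (\<forall>i\<in>{..<n}. 0 \<le> x i) \<and> sum x {..<n} \<le> 1} \<inter> space (lborel_Pi {..<n})"

lemma std_simplex_sets: "std_simplex n \<in> sets (lborel_Pi {..<n})"
proof -
  have "std_simplex n = Pi\<^sub>E {..<n} (\<lambda>_. {0..}) \<inter> (\<lambda>x. sum x {..<n}) -` {..1} \<inter> space (lborel_Pi {..<n})"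
    by (auto simp: std_simplex_def space_PiM)
  also have "\<dots> \<in> sets (lborel_Pi {..<n})"
    by measurable
  finally show ?thesis .
qed

lemma emeasure_std_simplex: "emeasure (lborel_Pi {..<n}) (std_simplex n) = ennreal (1 / fact n)"
  unfolding std_simplex_def using emeasure_std_simplex_aux[of "{..<n}" 1] by simp

section \<open>Fibonacci weights\<close>

definition fib_excess :: "(nat \<Rightarrow> real) \<Rightarrow> nat \<Rightarrow> real" where
  "fib_excess l j = l j - (if 1 \<le> j then l (j - 1) else 0) - (if 2 \<le> j then l (j - 2) else 0)"

definition fib_weight :: "nat \<Rightarrow> real" where
  "fib_weight m = (\<Sum>i\<le>m. real (fib (Suc i)))"

lemma fib_weight_0: "fib_weight 0 = 1"
  by (simp add: fib_weight_def)

lemma fib_excess_cong: "(\<And>i. i \<le> j \<Longrightarrow> l i = l' i) \<Longrightarrow> fib_excess l j = fib_excess l' j"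
  by (simp add: fib_excess_def)

lemma fib_expansion: "l k = (\<Sum>j\<le>k. real (fib (Suc k - j)) * fib_excess l j)"
proof (induction k rule: fib.induct)
  case 1
  then show ?case by (simp add: fib_excess_def)
next
  case 2
  then show ?case by (simp add: fib_excess_def)
next
  case (3 m)
  have F: "real (fib (Suc (Suc (Suc m)) - j)) = fib (Suc (Suc m) - j) + fib (Suc m - j)" if "j \<le> m" for j
  proof -
    have "Suc (Suc (Suc m)) - j = Suc (Suc (Suc m - j))" "Suc (Suc m) - j = Suc (Suc m - j)"
      using that by auto
    then show ?thesis by (simp only: fib.simps(3) of_nat_add)
  qed
  have "(\<Sum>j\<le>Suc (Suc m). real (fib (Suc (Suc (Suc m)) - j)) * fib_excess l j)
      = fib_excess l (Suc (Suc m)) + fib_excess l (Suc m)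
        + (\<Sum>j\<le>m. fib (Suc (Suc m) - j) * fib_excess l j) + (\<Sum>j\<le>m. fib (Suc m - j) * fib_excess l j)"
    by (simp add: F distrib_right sum.distrib Suc_diff_le)
  also have "(\<Sum>j\<le>m. fib (Suc (Suc m) - j) * fib_excess l j) = l (Suc m) - fib_excess l (Suc m)"
    using "3.IH"(1) by (simp add: Suc_diff_le)
  also have "(\<Sum>j\<le>m. fib (Suc m - j) * fib_excess l j) = l m"
    using "3.IH"(2) by simp
  finally show ?case
    by (simp add: fib_excess_def)
qed

lemma sum_eq_fib_weighted_excess:
  "(\<Sum>k\<le>n. l k) = (\<Sum>j\<le>n. fib_weight (n - j) * fib_excess l j)"
proof (induction n)
  case 0
  then show ?case by (simp add: fib_weight_def fib_excess_def)
next
  case (Suc n)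
  have W: "fib_weight (Suc n - j) = fib_weight (n - j) + fib (Suc (Suc n) - j)" if "j \<le> n" for j
    using that by (simp add: fib_weight_def Suc_diff_le)
  have "(\<Sum>j\<le>Suc n. fib_weight (Suc n - j) * fib_excess l j)
      = (\<Sum>j\<le>n. fib_weight (n - j) * fib_excess l j)
        + ((\<Sum>j\<le>n. fib (Suc (Suc n) - j) * fib_excess l j) + fib_excess l (Suc n))"
    by (simp add: W distrib_right sum.distrib fib_weight_0)
  also have "(\<Sum>j\<le>n. fib (Suc (Suc n) - j) * fib_excess l j) + fib_excess l (Suc n) = l (Suc n)"
    using fib_expansion[of l "Suc n"] by simp
  finally show ?case
    using Suc.IH by simp
qed

lemma fib_weight_pos: "0 < fib_weight m"
  unfolding fib_weight_def by (rule sum_pos2[of _ 0]) auto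

lemma fib_weight_Suc: "fib_weight (Suc m) = fib_weight m + fib (Suc (Suc m))"
  by (simp add: fib_weight_def)

lemma fib_weight_ge: "4 \<le> m \<Longrightarrow> 2 * (real m + 1) \<le> fib_weight m"
proof (induction m rule: dec_induct)
  case base
  then show ?case by (simp add: fib_weight_def numeral_eq_Suc)
next
  case (step m)
  have "fib 3 \<le> fib (Suc (Suc m))"
    using step(1) by (intro fib_mono) simp
  then have "2 \<le> real (fib (Suc (Suc m)))"
    by (simp add: numeral_eq_Suc)
  then show ?case
    using step(3) by (simp add: fib_weight_Suc)
qed

section \<open>Spacings and cones of spacings\<close>

text \<open>When \<open>\<sigma>\<close> lists the points \<open>x (\<sigma> 0) \<le> \<dots> \<le> x (\<sigma> (n - 1))\<close> in increasing order,
  \<open>spacing n \<sigma> x i\<close> for \<open>i \<le> n\<close> is the length of the \<open>i\<close>-th segment from the left.\<close>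

definition spacing :: "nat \<Rightarrow> (nat \<Rightarrow> nat) \<Rightarrow> (nat \<Rightarrow> real) \<Rightarrow> nat \<Rightarrow> real" where
  "spacing n \<sigma> x i = (if i < n then x (\<sigma> i) else 1) - (if i = 0 then 0 else x (\<sigma> (i - 1)))"

lemma sum_spacing: "(\<Sum>i\<le>n. spacing n \<sigma> x i) = 1"
proof -
  define z where "z i = (if i = 0 then 0 else if i \<le> n then x (\<sigma> (i - 1)) else 1)" for i
  have "(\<Sum>i\<le>n. spacing n \<sigma> x i) = (\<Sum>i<Suc n. z (Suc i) - z i)"
    unfolding lessThan_Suc_atMost by (intro sum.cong) (auto simp: spacing_def z_def)
  also have "\<dots> = z (Suc n) - z 0"
    by (rule sum_lessThan_telescope)
  finally show ?thesis
    by (simp add: z_def)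
qed

lemma spacing_restrict:
  assumes "\<sigma> permutes {..<n}" and "i \<le> n"
  shows "spacing n \<sigma> (restrict x {..<n}) i = spacing n \<sigma> x i"
proof -
  have "\<sigma> k < n" if "k < n" for k
    using permutes_in_image[OF assms(1)] that by simp
  then show ?thesis
    using assms(2) by (simp add: spacing_def)
qed

lemma spacing_nonneg:
  assumes "\<sigma> permutes {..<n}" and "sorted (map (x \<circ> \<sigma>) [0..<n])"
    and "\<And>i. i < n \<Longrightarrow> x i \<in> {0..1}" and "i \<le> n"
  shows "0 \<le> spacing n \<sigma> x i"
proof -
  have "x (\<sigma> k) \<in> {0..1}" if "k < n" for k
    using permutes_in_image[OF assms(1), of k] assms(3)[of "\<sigma> k"] that by simp
  moreover have "x (\<sigma> (i - 1)) \<le> x (\<sigma> i)" if "0 < i" "i < n"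
    using sorted_nth_mono[OF assms(2), of "i - 1" i] that by simp
  ultimately show ?thesis
    using assms(4) by (cases "i = 0"; cases "i = n") (auto simp: spacing_def)
qed

lemma seg_lengths_eq_spacings:
  assumes "\<And>i. i < n \<Longrightarrow> \<omega> i \<in> {0..1}"
  obtains \<sigma> where "\<sigma> permutes {..<n}" and "sorted (map (\<omega> \<circ> \<sigma>) [0..<n])"
    and "seg_lengths \<omega> n = map (spacing n \<sigma> \<omega>) [0..<Suc n]"
proof -
  define xs where "xs = map \<omega> [0..<n]"
  have "mset (sort xs) = mset xs" by simp
  then obtain \<sigma> where \<sigma>: "\<sigma> permutes {..<length xs}" "permute_list \<sigma> xs = sort xs"
    by (rule mset_eq_permutation)
  have len: "length xs = n" by (simp add: xs_def)
  have \<sigma>n: "\<sigma> i < n" if "i < n" for i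
    using permutes_in_image[OF \<sigma>(1)] len that by auto
  have srt: "sort xs = map (\<omega> \<circ> \<sigma>) [0..<n]"
    using \<sigma>(2)[symmetric] \<sigma>n len by (auto simp: permute_list_def xs_def intro!: nth_equalityI)
  have s01: "sort (0 # 1 # xs) = 0 # sort xs @ [1]"
  proof (rule properties_for_sort)
    show "sorted (0 # sort xs @ [1])"
      using assms by (auto simp: sorted_append xs_def)
  qed simp
  have "seg_lengths \<omega> n = map (spacing n \<sigma> \<omega>) [0..<Suc n]"
    unfolding seg_lengths_def Let_def xs_def[symmetric] s01
    by (intro nth_equalityI) (auto simp: srt nth_append nth_Cons' spacing_def simp del: upt_Suc)
  moreover have "\<sigma> permutes {..<n}"
    using \<sigma>(1) len by simp
  moreover have "sorted (map (\<omega> \<circ> \<sigma>) [0..<n])"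
    using sorted_sort[of xs] srt by simp
  ultimately show ?thesis
    using that by blast
qed

text \<open>\<open>\<sigma>\<close> sorts the points and \<open>\<pi>\<close> sorts the \<open>n + 1\<close> spacings.\<close>

definition spacing_cone :: "nat \<Rightarrow> (nat \<Rightarrow> nat) \<Rightarrow> (nat \<Rightarrow> nat) \<Rightarrow> (nat \<Rightarrow> real) \<Rightarrow> (nat \<Rightarrow> real) set"
  where
  "spacing_cone n \<sigma> \<pi> w = {x \<in> space (lborel_Pi {..<n}).
     (\<forall>j<n. 0 \<le> fib_excess (spacing n \<sigma> x \<circ> \<pi>) j) \<and>
     (\<Sum>j<n. w j * fib_excess (spacing n \<sigma> x \<circ> \<pi>) j) \<le> 1}"

definition flip_above :: "nat \<Rightarrow> nat \<Rightarrow> nat \<Rightarrow> nat" where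
  "flip_above r n i = (if i < r then i else n + r - i)"

lemma flip_above_less: "i \<le> n \<Longrightarrow> i \<noteq> r \<Longrightarrow> r \<le> n \<Longrightarrow> flip_above r n i < n"
  by (auto simp: flip_above_def)

lemma flip_above_flip_above: "i \<le> n \<Longrightarrow> i \<noteq> r \<Longrightarrow> r \<le> n \<Longrightarrow> flip_above r n (flip_above r n i) = i"
  by (auto simp: flip_above_def)

text \<open>The spacing with index \<open>r\<close> is left out, as it is determined by the others; listing the
  rest from both ends towards \<open>r\<close> makes the map from points to spacings triangular.\<close>

definition spacings_except :: "nat \<Rightarrow> (nat \<Rightarrow> nat) \<Rightarrow> nat \<Rightarrow> (nat \<Rightarrow> real) \<Rightarrow> nat \<Rightarrow> real" where
  "spacings_except n \<sigma> r x = (\<lambda>k\<in>{..<n}. spacing n \<sigma> x (flip_above r n k))"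

definition weighted_excesses :: "nat \<Rightarrow> (nat \<Rightarrow> nat) \<Rightarrow> nat \<Rightarrow> (nat \<Rightarrow> real) \<Rightarrow> (nat \<Rightarrow> real)
    \<Rightarrow> nat \<Rightarrow> real" where
  "weighted_excesses n \<pi> r w u = (\<lambda>j\<in>{..<n}. w j * fib_excess (\<lambda>i. u (flip_above r n (\<pi> i))) j)"

lemma sum_lessThan_if_add_eq:
  fixes d k :: nat
  assumes "0 < d"
  shows "(\<Sum>j<k. (if j + d = k then c else 0) * f j) = (if d \<le> k then c * f (k - d) else (0::real))"
proof -
  have "(\<Sum>j<k. (if j + d = k then c else 0) * f j)
      = (\<Sum>j<k. if j = k - d then (if d \<le> k then c * f j else 0) else 0)"
    by (intro sum.cong) auto
  also have "\<dots> = (if d \<le> k then c * f (k - d) else 0)"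
    using assms by (subst sum.delta) auto
  finally show ?thesis .
qed

lemma spacings_except_triangular:
  assumes "r \<le> n"
  shows "spacings_except n \<sigma> r = triangular_map n (\<lambda>k. \<sigma> (if k < r then k else n - 1 + r - k))
     (\<lambda>k. if k < r then 1 else -1) (\<lambda>k. if k = r then 1 else 0)
     (\<lambda>k j. if j + 1 = k then (if k < r then -1 else if k = r then 0 else 1) else 0)"
proof
  fix x
  have "(\<Sum>j<k. (if Suc j = k then c else 0) * f j) = (if 0 < k then c * f (k - 1) else (0::real))"
    for k :: nat and c f
    using sum_lessThan_if_add_eq[of 1 k c f] by auto
  then show "spacings_except n \<sigma> r x = triangular_map n (\<lambda>k. \<sigma> (if k < r then k else n - 1 + r - k))
     (\<lambda>k. if k < r then 1 else -1) (\<lambda>k. if k = r then 1 else 0)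
     (\<lambda>k j. if j + 1 = k then (if k < r then -1 else if k = r then 0 else 1) else 0) x"
    using assms by (auto simp: fun_eq_iff spacings_except_def triangular_map_def spacing_def
        flip_above_def)
qed

lemma weighted_excesses_triangular:
  "weighted_excesses n \<pi> r w = triangular_map n (\<lambda>j. flip_above r n (\<pi> j)) w (\<lambda>_. 0)
     (\<lambda>j i. (if i + 1 = j then - w j else 0) + (if i + 2 = j then - w j else 0))"
proof
  fix u :: "nat \<Rightarrow> real"
  let ?u = "\<lambda>i. u (flip_above r n (\<pi> i))"
  have "(\<Sum>i<j. ((if i + 1 = j then - w j else 0) + (if i + 2 = j then - w j else 0)) * ?u i)
      = (\<Sum>i<j. (if i + 1 = j then - w j else 0) * ?u i) + (\<Sum>i<j. (if i + 2 = j then - w j else 0) * ?u i)"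
    for j by (simp only: distrib_right sum.distrib)
  also have "\<dots> j = (if 1 \<le> j then - w j * ?u (j - 1) else 0) + (if 2 \<le> j then - w j * ?u (j - 2) else 0)"
    for j by (simp only: sum_lessThan_if_add_eq[of 1] sum_lessThan_if_add_eq[of 2] zero_less_one
        zero_less_numeral)
  finally show "weighted_excesses n \<pi> r w u = triangular_map n (\<lambda>j. flip_above r n (\<pi> j)) w (\<lambda>_. 0)
     (\<lambda>j i. (if i + 1 = j then - w j else 0) + (if i + 2 = j then - w j else 0)) u"
    by (simp add: fun_eq_iff weighted_excesses_def triangular_map_def fib_excess_def algebra_simps)
qed

lemma permutes_atMost_last:
  fixes \<pi> :: "nat \<Rightarrow> nat"
  assumes "\<pi> permutes {..n}" and "i < n"
  shows "\<pi> i \<le> n" and "\<pi> i \<noteq> \<pi> n"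
proof -
  show "\<pi> i \<le> n"
    using permutes_in_image[OF assms(1), of i] assms(2) by simp
  show "\<pi> i \<noteq> \<pi> n"
    using inj_eq[OF permutes_inj[OF assms(1)], of i n] assms(2) by simp
qed

lemma weighted_excesses_spacings_except:
  assumes \<pi>: "\<pi> permutes {..n}" and "j < n"
  shows "weighted_excesses n \<pi> (\<pi> n) w (spacings_except n \<sigma> (\<pi> n) x) j
           = w j * fib_excess (spacing n \<sigma> x \<circ> \<pi>) j"
proof -
  have r: "\<pi> n \<le> n"
    using permutes_in_image[OF \<pi>] by simp
  have "spacings_except n \<sigma> (\<pi> n) x (flip_above (\<pi> n) n (\<pi> i)) = spacing n \<sigma> x (\<pi> i)" if "i < n" for i
    using permutes_atMost_last[OF \<pi> that] r
    by (simp add: spacings_except_def flip_above_less flip_above_flip_above)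
  then show ?thesis
    using assms(2) by (auto simp: weighted_excesses_def intro!: fib_excess_cong)
qed

lemma spacing_cone_eq_vimage:
  assumes \<pi>: "\<pi> permutes {..n}" and w: "\<And>j. j < n \<Longrightarrow> 0 < w j"
  shows "spacing_cone n \<sigma> \<pi> w = spacings_except n \<sigma> (\<pi> n) -`
           (weighted_excesses n \<pi> (\<pi> n) w -` std_simplex n \<inter> space (lborel_Pi {..<n}))
           \<inter> space (lborel_Pi {..<n})"
proof -
  have space: "spacings_except n \<sigma> r x \<in> space (lborel_Pi {..<n})"
    "weighted_excesses n \<pi> r w u \<in> space (lborel_Pi {..<n})" for r x u
    by (simp_all add: spacings_except_def weighted_excesses_def space_PiM)
  have "0 \<le> w j * d \<longleftrightarrow> 0 \<le> d" if "j < n" for j d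
    using w[OF that] by (simp add: zero_le_mult_iff)
  then show ?thesis
    by (auto simp: spacing_cone_def std_simplex_def space weighted_excesses_spacings_except[OF \<pi>])
qed

lemma ennreal_eq_divide_if_mult_eq:
  assumes "0 < p" and "0 \<le> c" and "e * ennreal p = ennreal c"
  shows "e = ennreal (c / p)"
proof -
  have "e = e * ennreal p / ennreal p"
    using assms(1) by (simp add: ennreal_mult_divide_eq)
  also have "\<dots> = ennreal (c / p)"
    using assms by (simp add: divide_ennreal)
  finally show ?thesis .
qed

lemma spacings_except_index:
  fixes \<sigma> :: "nat \<Rightarrow> nat" and r n :: nat
  assumes "\<sigma> permutes {..<n}"
  defines "\<rho> \<equiv> \<lambda>k. \<sigma> (if k < r then k else n - 1 + r - k)"
  shows "inj_on \<rho> {..<n}" and "\<rho> ` {..<n} \<subseteq> {..<n}"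
proof -
  have "inj_on (\<lambda>k. if k < r then k else n - 1 + r - k) {..<n}"
  proof (rule inj_onI)
    fix k k' assume "k \<in> {..<n}" "k' \<in> {..<n}"
      and "(if k < r then k else n - 1 + r - k) = (if k' < r then k' else n - 1 + r - k')"
    then show "k = k'"
      by (cases "k < r"; cases "k' < r") simp_all
  qed
  moreover have "inj_on \<sigma> ((\<lambda>k. if k < r then k else n - 1 + r - k) ` {..<n})"
    using permutes_inj[OF assms(1)] by (rule inj_on_subset) simp
  ultimately show "inj_on \<rho> {..<n}"
    unfolding \<rho>_def by (rule comp_inj_on[unfolded comp_def])
  show "\<rho> ` {..<n} \<subseteq> {..<n}"
  proof (rule image_subsetI)
    fix k assume "k \<in> {..<n}"
    then show "\<rho> k \<in> {..<n}"
      using permutes_in_image[OF assms(1)] by (cases "k < r") (simp_all add: \<rho>_def)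
  qed
qed

lemma weighted_excesses_index:
  assumes \<pi>: "\<pi> permutes {..n}"
  defines "\<tau> \<equiv> \<lambda>j. flip_above (\<pi> n) n (\<pi> j)"
  shows "inj_on \<tau> {..<n}" and "\<tau> ` {..<n} \<subseteq> {..<n}"
proof -
  have r: "\<pi> n \<le> n"
    using permutes_in_image[OF \<pi>] by simp
  have "inj_on (flip_above (\<pi> n) n) ({..n} - {\<pi> n})"
    by (rule inj_on_inverseI[where g="flip_above (\<pi> n) n"]) (use r in \<open>auto simp: flip_above_flip_above\<close>)
  moreover have "\<pi> ` {..<n} \<subseteq> {..n} - {\<pi> n}"
    using permutes_atMost_last[OF \<pi>] by auto
  ultimately have "inj_on (flip_above (\<pi> n) n) (\<pi> ` {..<n})"
    by (rule inj_on_subset)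
  then show "inj_on \<tau> {..<n}"
    unfolding \<tau>_def by (rule comp_inj_on[OF inj_on_subset[OF permutes_inj[OF \<pi>] subset_UNIV], unfolded comp_def])
  show "\<tau> ` {..<n} \<subseteq> {..<n}"
  proof (rule image_subsetI)
    fix j assume "j \<in> {..<n}"
    then show "\<tau> j \<in> {..<n}"
      using permutes_atMost_last[OF \<pi>, of j] r by (simp add: \<tau>_def flip_above_less)
  qed
qed

lemma emeasure_spacing_cone:
  assumes \<sigma>: "\<sigma> permutes {..<n}" and \<pi>: "\<pi> permutes {..n}" and w: "\<And>j. j < n \<Longrightarrow> 0 < w j"
  shows "emeasure (lborel_Pi {..<n}) (spacing_cone n \<sigma> \<pi> w) = ennreal (1 / (fact n * (\<Prod>j<n. w j)))"
proof -
  define r where "r = \<pi> n"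
  have r: "r \<le> n"
    using permutes_in_image[OF \<pi>] by (simp add: r_def)
  let ?S = "weighted_excesses n \<pi> r w -` std_simplex n \<inter> space (lborel_Pi {..<n})"
  note \<tau> = weighted_excesses_index[OF \<pi>, folded r_def]
  have S: "?S \<in> sets (lborel_Pi {..<n})"
    unfolding weighted_excesses_triangular
    by (rule measurable_sets[OF triangular_map_measurable[OF \<tau>(2)] std_simplex_sets])
  have "(\<Prod>k<n. ennreal \<bar>w k\<bar>) = (\<Prod>k<n. ennreal (w k))"
    using w by (intro prod.cong) (auto simp: less_imp_le)
  also have "\<dots> = ennreal (\<Prod>k<n. w k)"
    using w by (intro prod_ennreal) (auto intro: less_imp_le)
  finally have "(\<Prod>k<n. ennreal \<bar>w k\<bar>) = ennreal (\<Prod>k<n. w k)" .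
  moreover have "w k \<noteq> 0" if "k < n" for k
    using w[OF that] by simp
  ultimately have measure_S: "emeasure (lborel_Pi {..<n}) ?S * ennreal (\<Prod>k<n. w k) = ennreal (1 / fact n)"
    using emeasure_triangular_map_vimage[OF \<tau>, of w, OF _ std_simplex_sets] emeasure_std_simplex
    unfolding weighted_excesses_triangular by simp
  have "emeasure (lborel_Pi {..<n}) (spacings_except n \<sigma> r -` ?S \<inter> space (lborel_Pi {..<n}))
      * (\<Prod>k<n. ennreal \<bar>if k < r then 1 else -1\<bar>) = emeasure (lborel_Pi {..<n}) ?S"
    unfolding spacings_except_triangular[OF r]
    by (rule emeasure_triangular_map_vimage[OF spacings_except_index[OF \<sigma>] _ S]) simp
  moreover have "(\<Prod>k<n. ennreal \<bar>if k < r then 1 else -1\<bar>) = 1"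
    by (intro prod.neutral) simp
  moreover have "spacing_cone n \<sigma> \<pi> w = spacings_except n \<sigma> r -` ?S \<inter> space (lborel_Pi {..<n})"
    unfolding r_def by (rule spacing_cone_eq_vimage[where w=w, OF \<pi> w])
  ultimately have "emeasure (lborel_Pi {..<n}) (spacing_cone n \<sigma> \<pi> w) = emeasure (lborel_Pi {..<n}) ?S"
    by (simp only: mult_1_right)
  also have "\<dots> = ennreal (1 / fact n / (\<Prod>k<n. w k))"
    using w by (intro ennreal_eq_divide_if_mult_eq[OF _ _ measure_S] prod_pos) simp_all
  finally show ?thesis
    by simp
qed

lemma spacing_cone_sets:
  assumes \<sigma>: "\<sigma> permutes {..<n}" and \<pi>: "\<pi> permutes {..n}" and w: "\<And>j. j < n \<Longrightarrow> 0 < w j"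
  shows "spacing_cone n \<sigma> \<pi> w \<in> sets (lborel_Pi {..<n})"
proof -
  have r: "\<pi> n \<le> n"
    using permutes_in_image[OF \<pi>] by simp
  have F1: "spacings_except n \<sigma> (\<pi> n) \<in> measurable (lborel_Pi {..<n}) (lborel_Pi {..<n})"
    unfolding spacings_except_triangular[OF r]
    by (rule triangular_map_measurable[OF spacings_except_index(2)[OF \<sigma>]])
  have F2: "weighted_excesses n \<pi> (\<pi> n) w \<in> measurable (lborel_Pi {..<n}) (lborel_Pi {..<n})"
    unfolding weighted_excesses_triangular
    by (rule triangular_map_measurable[OF weighted_excesses_index(2)[OF \<pi>]])
  have "spacing_cone n \<sigma> \<pi> w = spacings_except n \<sigma> (\<pi> n) -`
           (weighted_excesses n \<pi> (\<pi> n) w -` std_simplex n \<inter> space (lborel_Pi {..<n}))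
           \<inter> space (lborel_Pi {..<n})"
    by (rule spacing_cone_eq_vimage[where w=w, OF \<pi> w])
  also have "\<dots> \<in> sets (lborel_Pi {..<n})"
    by (intro measurable_sets[OF F1] measurable_sets[OF F2] std_simplex_sets)
  finally show ?thesis .
qed

section \<open>Configurations without a triangle\<close>

lemma has_triangle_permute_list:
  assumes p: "p permutes {..<length ls}" and "has_triangle (permute_list p ls)"
  shows "has_triangle ls"
proof -
  obtain i j k where ijk: "i < length ls" "j < length ls" "k < length ls" "i \<noteq> j" "i \<noteq> k" "j \<noteq> k"
    and "is_triangle (permute_list p ls ! i) (permute_list p ls ! j) (permute_list p ls ! k)"
    using assms(2) by (auto simp: has_triangle_def)
  then have "is_triangle (ls ! p i) (ls ! p j) (ls ! p k)"
    by (simp add: permute_list_nth[OF p])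
  moreover have "p i < length ls" "p j < length ls" "p k < length ls"
    using ijk permutes_in_image[OF p] by auto
  moreover have "p i \<noteq> p j" "p i \<noteq> p k" "p j \<noteq> p k"
    using ijk by (simp_all add: inj_eq[OF permutes_inj[OF p]])
  ultimately show ?thesis
    unfolding has_triangle_def by blast
qed

lemma fib_excess_nonneg_if_no_triangle:
  assumes no_tri: "\<not> has_triangle ls" and sorted: "sorted ls" and nonneg: "\<forall>x\<in>set ls. 0 \<le> x"
    and j: "j < length ls"
  shows "0 \<le> fib_excess (nth ls) j"
proof -
  have mono: "ls ! a \<le> ls ! b" if "a \<le> b" "b \<le> j" for a b
    using sorted_nth_mono[OF sorted that(1)] that j by simp
  consider "j = 0" | "j = 1" | "2 \<le> j" by linarith
  then show ?thesis
  proof cases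
    case 1
    then show ?thesis using nonneg j by (simp add: fib_excess_def)
  next
    case 2
    then show ?thesis using mono[of 0 1] by (simp add: fib_excess_def)
  next
    case 3
    show ?thesis
    proof (rule ccontr)
      assume "\<not> 0 \<le> fib_excess (nth ls) j"
      then have tri: "is_triangle (ls ! (j - 2)) (ls ! (j - 1)) (ls ! j)"
        using 3 mono[of "j - 2" "j - 1"] mono[of "j - 1" j] nonneg j
        by (simp add: fib_excess_def is_triangle_def) linarith
      have "has_triangle ls"
        unfolding has_triangle_def
        by (rule exI[of _ "j - 2"], rule exI[of _ "j - 1"], rule exI[of _ j]) (use 3 j tri in auto)
      with no_tri show False ..
    qed
  qed
qed

lemma sort_eq_map_permutation:
  obtains \<pi> where "\<pi> permutes {..<length xs}" and "sort xs = map (\<lambda>j. xs ! \<pi> j) [0..<length xs]"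
proof -
  have "mset (sort xs) = mset xs"
    by simp
  then obtain \<pi> where \<pi>: "\<pi> permutes {..<length xs}" "permute_list \<pi> xs = sort xs"
    by (rule mset_eq_permutation)
  have "sort xs = map (\<lambda>j. xs ! \<pi> j) [0..<length xs]"
    using \<pi>(2) by (simp add: permute_list_def)
  with \<pi>(1) show ?thesis
    by (rule that)
qed

lemma has_triangle_if_has_triangle_sort:
  assumes "has_triangle (sort ls)"
  shows "has_triangle ls"
proof -
  obtain \<pi> where \<pi>: "\<pi> permutes {..<length ls}" and "sort ls = map (\<lambda>j. ls ! \<pi> j) [0..<length ls]"
    by (rule sort_eq_map_permutation)
  then have "permute_list \<pi> ls = sort ls"
    by (simp add: permute_list_def)
  then show ?thesis
    using has_triangle_permute_list[OF \<pi>] assms by simp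
qed

lemma no_triangle_sorted_spacings:
  assumes \<omega>: "\<And>i. i < n \<Longrightarrow> \<omega> i \<in> {0..1}" and no_tri: "\<not> has_triangle (seg_lengths \<omega> n)"
  obtains \<sigma> \<pi> where "\<sigma> permutes {..<n}" and "\<pi> permutes {..n}"
    and "sorted (map (\<omega> \<circ> \<sigma>) [0..<n])" and "sorted (map (spacing n \<sigma> \<omega> \<circ> \<pi>) [0..<Suc n])"
    and "\<And>j. j \<le> n \<Longrightarrow> 0 \<le> fib_excess (spacing n \<sigma> \<omega> \<circ> \<pi>) j"
proof -
  obtain \<sigma> where \<sigma>: "\<sigma> permutes {..<n}" and sorted_\<omega>: "sorted (map (\<omega> \<circ> \<sigma>) [0..<n])"
    and seg: "seg_lengths \<omega> n = map (spacing n \<sigma> \<omega>) [0..<Suc n]"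
    by (rule seg_lengths_eq_spacings[OF \<omega>])
  define ls where "ls = map (spacing n \<sigma> \<omega>) [0..<Suc n]"
  have len: "length ls = Suc n"
    by (simp add: ls_def)
  obtain \<pi> where \<pi>: "\<pi> permutes {..<length ls}" and sort_ls: "sort ls = map (\<lambda>j. ls ! \<pi> j) [0..<length ls]"
    by (rule sort_eq_map_permutation)
  have \<pi>': "\<pi> permutes {..n}"
    using \<pi> unfolding len lessThan_Suc_atMost .
  have sort: "sort ls = map (spacing n \<sigma> \<omega> \<circ> \<pi>) [0..<Suc n]"
    unfolding sort_ls len
  proof (rule map_cong[OF refl])
    fix j assume "j \<in> set [0..<Suc n]"
    then have "j \<le> n"
      by (simp del: upt_Suc)
    then have "\<pi> j < Suc n"
      using permutes_in_image[OF \<pi>', of j] by simp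
    then show "ls ! \<pi> j = (spacing n \<sigma> \<omega> \<circ> \<pi>) j"
      by (simp add: ls_def del: upt_Suc)
  qed
  have no_tri_sorted: "\<not> has_triangle (sort ls)"
  proof
    assume "has_triangle (sort ls)"
    then have "has_triangle ls"
      by (rule has_triangle_if_has_triangle_sort)
    then show False
      using no_tri seg by (simp add: ls_def)
  qed
  have nonneg: "\<forall>x\<in>set (sort ls). 0 \<le> x"
    using spacing_nonneg[OF \<sigma> sorted_\<omega> \<omega>] by (auto simp: ls_def)
  have "0 \<le> fib_excess (spacing n \<sigma> \<omega> \<circ> \<pi>) j" if "j \<le> n" for j
  proof -
    have "0 \<le> fib_excess (nth (sort ls)) j"
      by (rule fib_excess_nonneg_if_no_triangle[OF no_tri_sorted sorted_sort nonneg]) (use that len in simp)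
    also have "fib_excess (nth (sort ls)) j = fib_excess (spacing n \<sigma> \<omega> \<circ> \<pi>) j"
      using that by (intro fib_excess_cong) (simp add: sort del: upt_Suc)
    finally show ?thesis .
  qed
  moreover have "sorted (map (spacing n \<sigma> \<omega> \<circ> \<pi>) [0..<Suc n])"
    using sorted_sort[of ls] unfolding sort .
  ultimately show ?thesis
    using that[OF \<sigma> \<pi>' sorted_\<omega>] by blast
qed

lemma sum_spacing_permute:
  assumes "\<pi> permutes {..n}"
  shows "(\<Sum>j\<le>n. spacing n \<sigma> x (\<pi> j)) = 1"
  using sum.permute[OF assms, of "spacing n \<sigma> x"] sum_spacing[of n \<sigma> x] by (simp add: comp_def)

lemma restrict_mem_spacing_cone_iff:
  assumes \<sigma>: "\<sigma> permutes {..<n}" and \<pi>: "\<pi> permutes {..n}"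
  shows "restrict \<omega> {..<n} \<in> spacing_cone n \<sigma> \<pi> w \<longleftrightarrow>
    (\<forall>j<n. 0 \<le> fib_excess (spacing n \<sigma> \<omega> \<circ> \<pi>) j) \<and>
    (\<Sum>j<n. w j * fib_excess (spacing n \<sigma> \<omega> \<circ> \<pi>) j) \<le> 1"
proof -
  have "fib_excess (spacing n \<sigma> (restrict \<omega> {..<n}) \<circ> \<pi>) j = fib_excess (spacing n \<sigma> \<omega> \<circ> \<pi>) j"
    if "j < n" for j
    using permutes_in_image[OF \<pi>] that by (intro fib_excess_cong) (simp add: spacing_restrict[OF \<sigma>])
  then show ?thesis
    by (simp add: spacing_cone_def space_PiM)
qed

lemma fib_weighted_excess_le_one:
  assumes \<pi>: "\<pi> permutes {..n}" and excess: "\<And>j. j \<le> n \<Longrightarrow> 0 \<le> fib_excess (spacing n \<sigma> \<omega> \<circ> \<pi>) j"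
  shows "(\<Sum>j<n. fib_weight (n - j) * fib_excess (spacing n \<sigma> \<omega> \<circ> \<pi>) j) \<le> 1"
proof -
  have "(\<Sum>j<n. fib_weight (n - j) * fib_excess (spacing n \<sigma> \<omega> \<circ> \<pi>) j)
      + fib_excess (spacing n \<sigma> \<omega> \<circ> \<pi>) n = (\<Sum>j\<le>n. spacing n \<sigma> \<omega> (\<pi> j))"
    using sum_eq_fib_weighted_excess[of "spacing n \<sigma> \<omega> \<circ> \<pi>" n]
    by (simp add: sum.lessThan_Suc[unfolded lessThan_Suc_atMost] fib_weight_0)
  then show ?thesis
    using sum_spacing_permute[OF \<pi>] excess[of n] by simp
qed

lemma seg_lengths_two:
  assumes "\<omega> 0 \<in> {0..1}" and "\<omega> 1 \<in> {0..1}"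
  shows "seg_lengths \<omega> 2 =
    [min (\<omega> 0) (\<omega> 1), max (\<omega> 0) (\<omega> 1) - min (\<omega> 0) (\<omega> 1), 1 - max (\<omega> 0) (\<omega> 1)]"
proof -
  have upt2: "[0..<2] = [0, 1::nat]" and upt3: "[0..<Suc 2] = [0, 1, 2::nat]"
    by (simp_all add: upt_rec)
  have "sort (0 # 1 # map \<omega> [0..<2]) = [0, min (\<omega> 0) (\<omega> 1), max (\<omega> 0) (\<omega> 1), 1]"
  proof (rule properties_for_sort)
    show "mset [0, min (\<omega> 0) (\<omega> 1), max (\<omega> 0) (\<omega> 1), 1] = mset (0 # 1 # map \<omega> [0..<2])"
      unfolding upt2 by (cases "\<omega> 0 \<le> \<omega> 1") (auto simp: min_def max_def)
    show "sorted [0, min (\<omega> 0) (\<omega> 1), max (\<omega> 0) (\<omega> 1), 1::real]"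
      using assms by auto
  qed
  then show ?thesis
    unfolding seg_lengths_def Let_def upt3 by simp
qed

lemma is_triangle_if_less_half:
  fixes a b c :: real
  assumes "a + b + c = 1" and "a < 1/2" and "b < 1/2" and "c < 1/2"
  shows "is_triangle a b c"
  using assms unfolding is_triangle_def by linarith

lemma has_triangle_three: "is_triangle a b c \<Longrightarrow> has_triangle [a, b, c]"
  unfolding has_triangle_def
  by (rule exI[of _ 0], rule exI[of _ 1], rule exI[of _ 2]) simp

text \<open>For \<open>n = 3\<close>: the longest spacing, number \<open>\<pi> 3\<close>, has the last point \<open>\<omega> 2\<close> as an
  endpoint.\<close>

definition touches_third_point :: "(nat \<Rightarrow> nat) \<Rightarrow> (nat \<Rightarrow> nat) \<Rightarrow> bool" where
  "touches_third_point \<sigma> \<pi> \<longleftrightarrow> (\<pi> 3 < 3 \<and> \<sigma> (\<pi> 3) = 2) \<or> (0 < \<pi> 3 \<and> \<sigma> (\<pi> 3 - 1) = 2)"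

lemma permutes_sorted_le_last:
  fixes l :: "nat \<Rightarrow> real"
  assumes \<pi>: "\<pi> permutes {..n}" and sorted: "sorted (map (l \<circ> \<pi>) [0..<Suc n])" and "i \<le> n"
  shows "l i \<le> l (\<pi> n)"
proof -
  have "i \<in> \<pi> ` {..n}"
    using permutes_image[OF \<pi>] assms(3) by simp
  then obtain a where "a \<le> n" "\<pi> a = i"
    by auto
  then show ?thesis
    using sorted_nth_mono[OF sorted, of a n] by (simp del: upt_Suc)
qed

lemma permutes_sorted_pair_le_last:
  fixes l :: "nat \<Rightarrow> real"
  assumes \<pi>: "\<pi> permutes {..3}" and sorted: "sorted (map (l \<circ> \<pi>) [0..<Suc 3])"
    and excess: "l (\<pi> 1) + l (\<pi> 2) \<le> l (\<pi> 3)"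
    and i: "i \<le> 3" "i' \<le> 3" and ne: "i \<noteq> i'" "i \<noteq> \<pi> 3" "i' \<noteq> \<pi> 3"
  shows "l i + l i' \<le> l (\<pi> 3)"
proof -
  have ranked: "l (\<pi> a) \<le> l (\<pi> b)" if "a \<le> b" "b \<le> 3" for a b
    using sorted_nth_mono[OF sorted, of a b] that by (simp del: upt_Suc)
  have "i \<in> \<pi> ` {..3}" "i' \<in> \<pi> ` {..3}"
    using permutes_image[OF \<pi>] i by simp_all
  then obtain a a' where a: "a \<le> 3" "\<pi> a = i" and a': "a' \<le> 3" "\<pi> a' = i'"
    by auto
  then have "a \<noteq> 3" "a' \<noteq> 3" "a \<noteq> a'"
    using ne by auto
  then have "a \<in> {0, 1, 2}" "a' \<in> {0, 1, 2}" "a \<noteq> a'"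
    using a(1) a'(1) by auto
  then have "l (\<pi> a) + l (\<pi> a') \<le> l (\<pi> 1) + l (\<pi> 2)"
    using ranked[of 0 1] ranked[of 1 2] by auto
  then show ?thesis
    using a a' excess by simp
qed

text \<open>Removing the point \<open>\<omega> 2\<close>, which is number \<open>q\<close> in increasing order, merges the spacings
  \<open>q\<close> and \<open>q + 1\<close>; the other segments of the two-point partition are spacings.\<close>

lemma two_point_segments_le:
  fixes \<sigma> :: "nat \<Rightarrow> nat"
  assumes \<sigma>: "\<sigma> permutes {..<3}" and sorted: "sorted (map (\<omega> \<circ> \<sigma>) [0..<3])" and q: "\<sigma> q = 2"
    and single: "\<And>i. i \<le> 3 \<Longrightarrow> spacing 3 \<sigma> \<omega> i \<le> L"
    and merged: "spacing 3 \<sigma> \<omega> q + spacing 3 \<sigma> \<omega> (Suc q) \<le> L"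
  shows "min (\<omega> 0) (\<omega> 1) \<le> L \<and> max (\<omega> 0) (\<omega> 1) - min (\<omega> 0) (\<omega> 1) \<le> L \<and> 1 - max (\<omega> 0) (\<omega> 1) \<le> L"
proof -
  let ?y = "\<lambda>i. \<omega> (\<sigma> i)" and ?l = "spacing 3 \<sigma> \<omega>"
  have y: "?y 0 \<le> ?y 1" "?y 1 \<le> ?y 2"
    using sorted by (simp_all add: upt_rec numeral_eq_Suc)
  have l: "?l 0 = ?y 0" "?l 1 = ?y 1 - ?y 0" "?l 2 = ?y 2 - ?y 1" "?l 3 = 1 - ?y 2"
    by (simp_all add: spacing_def)
  have "q < 3"
    using q permutes_not_in[OF \<sigma>, of q] by (cases "q < 3") auto
  have \<sigma>_other: "\<sigma> a < 2" if "a < 3" "a \<noteq> q" for a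
    using permutes_in_image[OF \<sigma>, of a] inj_eq[OF permutes_inj[OF \<sigma>], of a q] that q by auto
  have minmax: "min (\<omega> 0) (\<omega> 1) = min (?y a) (?y b) \<and> max (\<omega> 0) (\<omega> 1) = max (?y a) (?y b)"
    if "a < 3" "b < 3" "a \<noteq> b" "a \<noteq> q" "b \<noteq> q" for a b
  proof -
    have "\<sigma> a < 2" "\<sigma> b < 2"
      using \<sigma>_other that by simp_all
    moreover have "\<sigma> a \<noteq> \<sigma> b"
      using inj_eq[OF permutes_inj[OF \<sigma>]] that by simp
    ultimately have "\<sigma> a = 0 \<and> \<sigma> b = 1 \<or> \<sigma> a = 1 \<and> \<sigma> b = 0"
      by linarith
    then show ?thesis
      by (auto simp: min_def max_def)
  qed
  consider "q = 0" | "q = 1" | "q = 2"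
    using \<open>q < 3\<close> by linarith
  then show ?thesis
  proof cases
    case 1
    then show ?thesis
      using minmax[of 1 2] y l merged single[of 2] single[of 3] by (simp add: min_def max_def)
  next
    case 2
    then show ?thesis
      using minmax[of 0 2] y l merged single[of 0] single[of 3]
      by (simp add: min_def max_def numeral_2_eq_2)
  next
    case 3
    then show ?thesis
      using minmax[of 0 1] y l merged single[of 0] single[of 1] by (simp add: min_def max_def)
  qed
qed

text \<open>The two-point partition has a segment of length at least \<open>1/2\<close>. Unless the longest
  spacing touches \<open>\<omega> 2\<close>, neither spacing merged into that segment is the longest, so their
  sum is at most \<open>l\<^sub>1 + l\<^sub>2 \<le> l\<^sub>3\<close>.\<close>

lemma longest_spacing_ge_half:
  fixes \<sigma> \<pi> :: "nat \<Rightarrow> nat"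
  assumes \<sigma>: "\<sigma> permutes {..<3}" and \<pi>: "\<pi> permutes {..3}"
    and \<omega>: "\<And>i. i < 3 \<Longrightarrow> \<omega> i \<in> {0..1}" and sorted_\<omega>: "sorted (map (\<omega> \<circ> \<sigma>) [0..<3])"
    and sorted_l: "sorted (map (spacing 3 \<sigma> \<omega> \<circ> \<pi>) [0..<Suc 3])"
    and excess: "0 \<le> fib_excess (spacing 3 \<sigma> \<omega> \<circ> \<pi>) 3"
    and no_tri: "\<not> has_triangle (seg_lengths \<omega> 2)"
    and far: "\<not> touches_third_point \<sigma> \<pi>"
  shows "1/2 \<le> spacing 3 \<sigma> \<omega> (\<pi> 3)"
proof -
  let ?l = "spacing 3 \<sigma> \<omega>" and ?L = "spacing 3 \<sigma> \<omega> (\<pi> 3)"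
  have "2 \<in> \<sigma> ` {..<3}"
    using permutes_image[OF \<sigma>] by simp
  then obtain q where q: "q < 3" "\<sigma> q = 2"
    by auto
  have "\<pi> 3 \<noteq> q"
    using far q by (auto simp: touches_third_point_def)
  moreover have "\<pi> 3 \<noteq> Suc q"
  proof
    assume "\<pi> 3 = Suc q"
    then show False
      using far q by (simp add: touches_third_point_def)
  qed
  moreover have top_two: "?l (\<pi> 1) + ?l (\<pi> 2) \<le> ?L"
    using excess by (simp add: fib_excess_def)
  ultimately have "?l q + ?l (Suc q) \<le> ?L"
    using q by (intro permutes_sorted_pair_le_last[OF \<pi> sorted_l top_two]) auto
  then have gaps: "min (\<omega> 0) (\<omega> 1) \<le> ?L \<and> max (\<omega> 0) (\<omega> 1) - min (\<omega> 0) (\<omega> 1) \<le> ?L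
      \<and> 1 - max (\<omega> 0) (\<omega> 1) \<le> ?L"
    using permutes_sorted_le_last[OF \<pi> sorted_l]
    by (intro two_point_segments_le[OF \<sigma> sorted_\<omega> q(2)]) auto
  show ?thesis
  proof (rule ccontr)
    assume "\<not> 1/2 \<le> ?L"
    then have "is_triangle (min (\<omega> 0) (\<omega> 1)) (max (\<omega> 0) (\<omega> 1) - min (\<omega> 0) (\<omega> 1))
        (1 - max (\<omega> 0) (\<omega> 1))"
      using gaps by (intro is_triangle_if_less_half) auto
    then have "has_triangle (seg_lengths \<omega> 2)"
      using seg_lengths_two[of \<omega>] \<omega>[of 0] \<omega>[of 1] has_triangle_three by simp
    with no_tri show False ..
  qed
qed

text \<open>For \<open>n = 3\<close>, when the longest spacing does not touch \<open>\<omega> 2\<close> it is at least \<open>1/2\<close>,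
  so \<open>8 d\<^sub>0 + 4 d\<^sub>1 + 2 d\<^sub>2 = 2 (l\<^sub>0 + l\<^sub>1 + l\<^sub>2) \<le> 1\<close>: the weight \<open>fib_weight 3 = 7\<close>
  of the first excess can be raised to \<open>8\<close>.\<close>

definition cone_weight :: "nat \<Rightarrow> (nat \<Rightarrow> nat) \<Rightarrow> (nat \<Rightarrow> nat) \<Rightarrow> nat \<Rightarrow> real" where
  "cone_weight n \<sigma> \<pi> j =
     (if n = 3 \<and> j = 0 \<and> \<not> touches_third_point \<sigma> \<pi> then 8 else fib_weight (n - j))"

definition no_triangle_cover :: "nat \<Rightarrow> (nat \<Rightarrow> real) set" where
  "no_triangle_cover n = (\<Union>(\<sigma>, \<pi>) \<in> {\<sigma>. \<sigma> permutes {..<n}} \<times> {\<pi>. \<pi> permutes {..n}}.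
     spacing_cone n \<sigma> \<pi> (cone_weight n \<sigma> \<pi>))"

lemma cone_weight_pos: "0 < cone_weight n \<sigma> \<pi> j"
  by (simp add: cone_weight_def fib_weight_pos)

lemma fib_weight_small: "fib_weight (Suc 0) = 2" "fib_weight 2 = 4"
  by (simp_all add: fib_weight_def numeral_eq_Suc)

lemma restrict_mem_no_triangle_cover:
  assumes \<omega>: "\<And>i. \<omega> i \<in> {0..1}" and no_tri: "\<And>m. m \<le> n \<Longrightarrow> \<not> has_triangle (seg_lengths \<omega> m)"
  shows "restrict \<omega> {..<n} \<in> no_triangle_cover n"
proof -
  obtain \<sigma> \<pi> where \<sigma>: "\<sigma> permutes {..<n}" and \<pi>: "\<pi> permutes {..n}"
    and sorted_\<omega>: "sorted (map (\<omega> \<circ> \<sigma>) [0..<n])"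
    and sorted_l: "sorted (map (spacing n \<sigma> \<omega> \<circ> \<pi>) [0..<Suc n])"
    and excess: "\<And>j. j \<le> n \<Longrightarrow> 0 \<le> fib_excess (spacing n \<sigma> \<omega> \<circ> \<pi>) j"
    using no_triangle_sorted_spacings[OF _ no_tri] \<omega> by blast
  let ?d = "fib_excess (spacing n \<sigma> \<omega> \<circ> \<pi>)"
  have "(\<Sum>j<n. cone_weight n \<sigma> \<pi> j * ?d j) \<le> 1"
  proof (cases "n = 3 \<and> \<not> touches_third_point \<sigma> \<pi>")
    case True
    then have n: "n = 3" and far: "\<not> touches_third_point \<sigma> \<pi>"
      by simp_all
    let ?l = "\<lambda>j. spacing 3 \<sigma> \<omega> (\<pi> j)"
    have "1/2 \<le> ?l 3"
      using longest_spacing_ge_half[of \<sigma> \<pi> \<omega>] \<sigma> \<pi> \<omega> sorted_\<omega> sorted_l excess[of 3] no_tri[of 2] far n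
      by simp
    moreover have "{..<3::nat} = {0, 1, 2}" "{..3::nat} = {0, 1, 2, 3}"
      by auto
    moreover have "(\<Sum>j\<le>3. ?l j) = 1"
      using sum_spacing_permute \<pi> n by simp
    ultimately show ?thesis
      using far n by (simp add: cone_weight_def fib_weight_small fib_excess_def)
  next
    case False
    then have "cone_weight n \<sigma> \<pi> j = fib_weight (n - j)" for j
      by (auto simp: cone_weight_def)
    then show ?thesis
      using fib_weighted_excess_le_one[OF \<pi> excess] by simp
  qed
  then have "restrict \<omega> {..<n} \<in> spacing_cone n \<sigma> \<pi> (cone_weight n \<sigma> \<pi>)"
    using excess by (simp add: restrict_mem_spacing_cone_iff[OF \<sigma> \<pi>])
  then show ?thesis
    using \<sigma> \<pi> by (auto simp: no_triangle_cover_def)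
qed

section \<open>Volume of the cover\<close>

lemma no_triangle_cover_sets: "no_triangle_cover n \<in> sets (lborel_Pi {..<n})"
  unfolding no_triangle_cover_def
  by (rule sets.finite_UN) (auto intro: spacing_cone_sets cone_weight_pos simp: finite_permutations)

lemma emeasure_no_triangle_cover_le:
  "emeasure (lborel_Pi {..<n}) (no_triangle_cover n)
     \<le> ennreal (\<Sum>\<sigma> | \<sigma> permutes {..<n}. \<Sum>\<pi> | \<pi> permutes {..n}.
                  1 / (fact n * (\<Prod>j<n. cone_weight n \<sigma> \<pi> j)))"
proof -
  let ?P = "{\<sigma>. \<sigma> permutes {..<n}} \<times> {\<pi>. \<pi> permutes {..n}}"
  have fin: "finite ?P"
    by (simp add: finite_permutations)
  let ?C = "\<lambda>(\<sigma>, \<pi>). spacing_cone n \<sigma> \<pi> (cone_weight n \<sigma> \<pi>)"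
  have "emeasure (lborel_Pi {..<n}) (no_triangle_cover n) = emeasure (lborel_Pi {..<n}) (\<Union>p\<in>?P. ?C p)"
    by (simp add: no_triangle_cover_def)
  also have "\<dots> \<le> (\<Sum>p\<in>?P. emeasure (lborel_Pi {..<n}) (?C p))"
    by (rule emeasure_subadditive_finite[OF fin]) (auto intro: spacing_cone_sets cone_weight_pos)
  also have "\<dots> = (\<Sum>(\<sigma>, \<pi>) \<in> ?P. ennreal (1 / (fact n * (\<Prod>j<n. cone_weight n \<sigma> \<pi> j))))"
    by (intro sum.cong refl) (auto simp: emeasure_spacing_cone cone_weight_pos)
  also have "\<dots> = ennreal (\<Sum>(\<sigma>, \<pi>) \<in> ?P. 1 / (fact n * (\<Prod>j<n. cone_weight n \<sigma> \<pi> j)))"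
    by (subst sum_ennreal[symmetric])
      (auto simp: case_prod_beta
        intro!: divide_nonneg_nonneg mult_nonneg_nonneg prod_nonneg less_imp_le[OF cone_weight_pos])
  finally show ?thesis
    by (simp add: sum.cartesian_product case_prod_beta)
qed

lemma sum_permutes_apply_last:
  fixes g :: "nat \<Rightarrow> real"
  shows "(\<Sum>\<pi> | \<pi> permutes {..n}. g (\<pi> n)) = fact n * (\<Sum>r\<le>n. g r)"
proof -
  have atMost: "{..n} = insert n {..<n}"
    by auto
  have "(\<Sum>\<pi> | \<pi> permutes {..n}. g (\<pi> n))
      = (\<Sum>r\<in>insert n {..<n}. \<Sum>q | q permutes {..<n}. g ((Transposition.transpose n r \<circ> q) n))"
    unfolding atMost by (rule sum_over_permutations_insert) auto
  also have "\<dots> = (\<Sum>r\<in>insert n {..<n}. fact n * g r)"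
  proof (rule sum.cong[OF refl])
    fix r
    have "(Transposition.transpose n r \<circ> q) n = r" if "q permutes {..<n}" for q
      using permutes_not_in[OF that, of n] by simp
    then show "(\<Sum>q | q permutes {..<n}. g ((Transposition.transpose n r \<circ> q) n)) = fact n * g r"
      by (simp add: card_permutations)
  qed
  finally show ?thesis
    by (simp add: atMost sum_distrib_left distrib_left)
qed

lemma touches_third_point_iff:
  assumes \<sigma>: "\<sigma> permutes {..<3}" and q: "\<sigma> q = 2"
  shows "touches_third_point \<sigma> \<pi> \<longleftrightarrow> \<pi> 3 = q \<or> \<pi> 3 = Suc q"
proof -
  have "q < 3"
  proof (rule ccontr)
    assume "\<not> q < 3"
    then show False
      using permutes_not_in[OF \<sigma>, of q] q by simp
  qed
  have \<sigma>2: "\<sigma> x = 2 \<longleftrightarrow> x = q" for x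
    using inj_eq[OF permutes_inj[OF \<sigma>], of x q] q by simp
  show ?thesis
    unfolding touches_third_point_def \<sigma>2 using \<open>q < 3\<close> by auto
qed

lemma cone_weight_three_sum:
  "(\<Sum>\<sigma> | \<sigma> permutes {..<3}. \<Sum>\<pi> | \<pi> permutes {..3}.
      1 / (fact 3 * (\<Prod>j<3. cone_weight 3 \<sigma> \<pi> j))) = 45 / 112"
proof -
  have "(\<Sum>\<pi> | \<pi> permutes {..3}. 1 / (fact 3 * (\<Prod>j<3. cone_weight 3 \<sigma> \<pi> j))) = 1 / 28 + 1 / 32"
    if \<sigma>: "\<sigma> permutes {..<3}" for \<sigma>
  proof -
    have "2 \<in> \<sigma> ` {..<3}"
      using permutes_image[OF \<sigma>] by simp
    then obtain q where "q < 3" "\<sigma> q = 2"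
      by auto
    \<comment> \<open>\<open>56 = 7 * 4 * 2\<close> and \<open>64 = 8 * 4 * 2\<close> are the products of the three cone weights\<close>
    define g where "g r = 1 / (6 * (if r = q \<or> r = Suc q then 56 else 64 :: real))" for r
    have "{..<3::nat} = {0, 1, 2}" "{..3::nat} = {0, 1, 2, 3}"
      by auto
    then have "1 / (fact 3 * (\<Prod>j<3. cone_weight 3 \<sigma> \<pi> j)) = g (\<pi> 3)" for \<pi>
      using touches_third_point_iff[OF \<sigma> \<open>\<sigma> q = 2\<close>]
      by (simp add: g_def cone_weight_def fib_weight_def fact_numeral numeral_eq_Suc)
    then have "(\<Sum>\<pi> | \<pi> permutes {..3}. 1 / (fact 3 * (\<Prod>j<3. cone_weight 3 \<sigma> \<pi> j)))
        = fact 3 * (\<Sum>r\<le>3. g r)"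
      by (simp add: sum_permutes_apply_last)
    also have "\<dots> = 1 / 28 + 1 / 32"
    proof -
      consider "q = 0" | "q = 1" | "q = 2"
        using \<open>q < 3\<close> by linarith
      then show ?thesis
        using \<open>{..3} = {0, 1, 2, 3}\<close> by cases (simp_all add: g_def fact_numeral)
    qed
    finally show ?thesis .
  qed
  then have "(\<Sum>\<sigma> | \<sigma> permutes {..<3}. \<Sum>\<pi> | \<pi> permutes {..3}.
      1 / (fact 3 * (\<Prod>j<3. cone_weight 3 \<sigma> \<pi> j))) = (\<Sum>\<sigma> | \<sigma> permutes {..<3::nat}. 1 / 28 + 1 / 32)"
    by (intro sum.cong) simp_all
  also have "\<dots> = 45 / 112"
    by (simp add: card_permutations fact_numeral)
  finally show ?thesis .
qed

definition cover_bound :: "nat \<Rightarrow> real" where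
  "cover_bound n = (if n = 3 then 45 / 112 else fact (Suc n) / (\<Prod>m\<in>{1..n}. fib_weight m))"

lemma prod_fib_weight_reindex: "(\<Prod>j<n. fib_weight (n - j)) = (\<Prod>m\<in>{1..n}. fib_weight m)"
  by (rule prod.reindex_bij_witness[of _ "\<lambda>m. n - m" "\<lambda>j. n - j"]) auto

lemma emeasure_no_triangle_cover:
  "emeasure (lborel_Pi {..<n}) (no_triangle_cover n) \<le> ennreal (cover_bound n)"
proof (cases "n = 3")
  case True
  then show ?thesis
    using emeasure_no_triangle_cover_le[of 3] by (simp add: cone_weight_three_sum cover_bound_def)
next
  case False
  then have "cone_weight n \<sigma> \<pi> = (\<lambda>j. fib_weight (n - j))" for \<sigma> \<pi>
    by (auto simp: cone_weight_def)
  then have "(\<Sum>\<sigma> | \<sigma> permutes {..<n}. \<Sum>\<pi> | \<pi> permutes {..n}.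
      1 / (fact n * (\<Prod>j<n. cone_weight n \<sigma> \<pi> j))) = cover_bound n"
    using False by (simp add: cover_bound_def card_permutations prod_fib_weight_reindex del: fact_Suc)
  then show ?thesis
    using emeasure_no_triangle_cover_le[of n] by simp
qed

lemma cover_bound_Suc_le:
  assumes "4 \<le> n"
  shows "cover_bound (Suc n) \<le> cover_bound n / 2"
proof -
  let ?P = "\<Prod>m\<in>{1..n}. fib_weight m"
  have P: "0 < ?P"
    by (intro prod_pos fib_weight_pos)
  have "(\<Prod>m\<in>{1..Suc n}. fib_weight m) = fib_weight (Suc n) * ?P"
    by (simp add: atLeastAtMostSuc_conv)
  then have "cover_bound (Suc n) = cover_bound n * ((real n + 2) / fib_weight (Suc n))"
    using assms P fib_weight_pos[of "Suc n"] by (simp add: cover_bound_def field_simps)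
  also have "\<dots> \<le> cover_bound n * (1 / 2)"
  proof (rule mult_left_mono)
    show "(real n + 2) / fib_weight (Suc n) \<le> 1 / 2"
      using fib_weight_ge[of "Suc n"] fib_weight_pos[of "Suc n"] assms by (simp add: field_simps)
    show "0 \<le> cover_bound n"
      using P assms by (simp add: cover_bound_def)
  qed
  finally show ?thesis
    by simp
qed

lemma suminf_ennreal_le_geometric_tail:
  fixes b :: "nat \<Rightarrow> real"
  assumes nonneg: "\<And>n. 0 \<le> b n" and halving: "\<And>n. N \<le> n \<Longrightarrow> b (Suc n) \<le> b n / 2"
  shows "(\<Sum>n. ennreal (b n)) \<le> ennreal ((\<Sum>n<N. b n) + 2 * b N)"
proof -
  define b' where "b' n = (if n < N then b n else b N * (1/2) ^ (n - N))" for n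
  have tail: "b n \<le> b N * (1/2) ^ (n - N)" if "N \<le> n" for n
    using that
  proof (induction n rule: dec_induct)
    case (step n)
    then have "b (Suc n) \<le> b N * (1/2) ^ (n - N) / 2"
      using halving[of n] by simp
    also have "\<dots> = b N * (1/2) ^ (Suc n - N)"
      using step(1) by (simp add: Suc_diff_le)
    finally show ?case .
  qed simp
  have "(\<lambda>i. b' (i + N)) sums (b N * 2)"
    using sums_mult[OF geometric_sums[of "1/2::real"], of "b N"] by (simp add: b'_def)
  then have "b' sums (b N * 2 + (\<Sum>n<N. b' n))"
    by (simp only: sums_iff_shift)
  moreover have "(\<Sum>n<N. b' n) = (\<Sum>n<N. b n)"
    by (simp add: b'_def)
  ultimately have sums: "b' sums (b N * 2 + (\<Sum>n<N. b n))"
    by simp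
  have "(\<Sum>n. ennreal (b n)) \<le> (\<Sum>n. ennreal (b' n))"
    using tail by (intro suminf_le summableI) (simp add: b'_def ennreal_leI)
  also have "\<dots> = ennreal (\<Sum>n. b' n)"
    using sums nonneg by (intro suminf_ennreal2) (simp_all add: sums_iff b'_def[abs_def])
  also have "(\<Sum>n. b' n) = (\<Sum>n<N. b n) + 2 * b N"
    using sums by (simp add: sums_iff)
  finally show ?thesis .
qed

lemma suminf_cover_bound: "(\<Sum>n. ennreal (cover_bound n)) \<le> ennreal 3.398"
proof -
  have "(\<Sum>n. ennreal (cover_bound n)) \<le> ennreal ((\<Sum>n<8. cover_bound n) + 2 * cover_bound 8)"
  proof (rule suminf_ennreal_le_geometric_tail)
    show "0 \<le> cover_bound n" for n
      by (simp add: cover_bound_def prod_nonneg fib_weight_pos less_imp_le)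
    show "cover_bound (Suc n) \<le> cover_bound n / 2" if "8 \<le> n" for n
      using that by (intro cover_bound_Suc_le) simp
  qed
  also have "(\<Sum>n<8. cover_bound n) + 2 * cover_bound 8 \<le> 3.398"
    by (simp add: cover_bound_def fib_weight_def numeral_eq_Suc atLeastAtMostSuc_conv)
  finally show ?thesis
    by (simp add: ennreal_leI)
qed

section \<open>The expected number of breaking points\<close>

lemma PiM_uniform_eq_density:
  assumes fin: "finite I"
  shows "Pi\<^sub>M I (\<lambda>_. uniform_measure lborel {0..1::real})
           = density (lborel_Pi I) (indicator (Pi\<^sub>E I (\<lambda>_. {0..1})))"
proof -
  interpret U: prob_space "uniform_measure lborel {0..1::real}"
    by (intro prob_space_uniform_measure) auto
  interpret product_sigma_finite "\<lambda>_::nat. uniform_measure lborel {0..1::real}"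
    using U.sigma_finite_measure by (simp add: product_sigma_finite_def)
  interpret L: product_sigma_finite "\<lambda>_::nat. lborel::real measure"
    by standard
  show ?thesis
  proof (rule PiM_eqI[symmetric, OF fin])
    show "sets (density (lborel_Pi I) (indicator (Pi\<^sub>E I (\<lambda>_. {0..1}))))
        = sets (Pi\<^sub>M I (\<lambda>_. uniform_measure lborel {0..1::real}))"
      unfolding sets_density by (rule sets_PiM_cong) simp_all
    fix A assume A: "\<And>i. i \<in> I \<Longrightarrow> A i \<in> sets (uniform_measure lborel {0..1::real})"
    have C: "Pi\<^sub>E I (\<lambda>_. {0..1::real}) \<in> sets (lborel_Pi I)"
      using fin by (intro sets_PiM_I_finite) auto
    have PA: "Pi\<^sub>E I A \<in> sets (lborel_Pi I)"
      using fin A by (intro sets_PiM_I_finite) auto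
    have "emeasure (density (lborel_Pi I) (indicator (Pi\<^sub>E I (\<lambda>_. {0..1})))) (Pi\<^sub>E I A)
        = (\<integral>\<^sup>+x. indicator (Pi\<^sub>E I (\<lambda>_. {0..1})) x * indicator (Pi\<^sub>E I A) x \<partial>lborel_Pi I)"
      by (rule emeasure_density[OF borel_measurable_indicator[OF C] PA])
    also have "\<dots> = (\<integral>\<^sup>+x. indicator (Pi\<^sub>E I (\<lambda>i. {0..1} \<inter> A i)) x \<partial>lborel_Pi I)"
      by (intro nn_integral_cong) (simp only: indicator_inter_arith[symmetric] PiE_Int)
    also have "\<dots> = (\<Prod>i\<in>I. emeasure lborel ({0..1} \<inter> A i))"
      using fin A by (simp add: sets_PiM_I_finite L.emeasure_PiM)
    also have "\<dots> = (\<Prod>i\<in>I. emeasure (uniform_measure lborel {0..1::real}) (A i))"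
      using A by (intro prod.cong) (auto simp: divide_ennreal_def)
    finally show "emeasure (density (lborel_Pi I) (indicator (Pi\<^sub>E I (\<lambda>_. {0..1})))) (Pi\<^sub>E I A)
        = (\<Prod>i\<in>I. emeasure (uniform_measure lborel {0..1::real}) (A i))" .
  qed
qed

lemma emeasure_PiM_uniform_le:
  assumes fin: "finite I" and S: "S \<in> sets (lborel_Pi I)"
  shows "emeasure (Pi\<^sub>M I (\<lambda>_. uniform_measure lborel {0..1::real})) S \<le> emeasure (lborel_Pi I) S"
proof -
  have C: "Pi\<^sub>E I (\<lambda>_. {0..1::real}) \<in> sets (lborel_Pi I)"
    using fin by (intro sets_PiM_I_finite) auto
  have "emeasure (Pi\<^sub>M I (\<lambda>_. uniform_measure lborel {0..1::real})) S
      = (\<integral>\<^sup>+x. indicator (Pi\<^sub>E I (\<lambda>_. {0..1})) x * indicator S x \<partial>lborel_Pi I)"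
    unfolding PiM_uniform_eq_density[OF fin]
    by (rule emeasure_density[OF borel_measurable_indicator[OF C] S])
  also have "\<dots> \<le> (\<integral>\<^sup>+x. indicator S x \<partial>lborel_Pi I)"
    by (intro nn_integral_mono) (auto simp: indicator_def)
  also have "\<dots> = emeasure (lborel_Pi I) S"
    using S by simp
  finally show ?thesis .
qed

lemma space_break_space: "space break_space = UNIV"
  by (simp add: break_space_def space_PiM)

lemma sets_break_space_restrict:
  assumes "S \<in> sets (lborel_Pi {..<n})"
  shows "{\<omega> \<in> space break_space. restrict \<omega> {..<n} \<in> S} \<in> sets break_space"
proof -
  let ?U = "Pi\<^sub>M {..<n} (\<lambda>_. uniform_measure lborel {0..1::real})"
  have r: "(\<lambda>\<omega>. restrict \<omega> {..<n}) \<in> measurable break_space ?U"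
    unfolding break_space_def by (rule measurable_restrict_subset) simp
  have "sets ?U = sets (lborel_Pi {..<n})"
    by (rule sets_PiM_cong) simp_all
  then have S: "S \<in> sets ?U"
    using assms by simp
  have "{\<omega> \<in> space break_space. restrict \<omega> {..<n} \<in> S}
      = (\<lambda>\<omega>. restrict \<omega> {..<n}) -` S \<inter> space break_space"
    by auto
  also have "\<dots> \<in> sets break_space"
    by (rule measurable_sets[OF r S])
  finally show ?thesis .
qed

lemma emeasure_break_space_restrict_le:
  assumes S: "S \<in> sets (lborel_Pi {..<n})"
  shows "emeasure break_space {\<omega> \<in> space break_space. restrict \<omega> {..<n} \<in> S}
           \<le> emeasure (lborel_Pi {..<n}) S"
proof -
  let ?U = "Pi\<^sub>M {..<n} (\<lambda>_. uniform_measure lborel {0..1::real})"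
  let ?r = "\<lambda>\<omega>. \<lambda>i\<in>{..<n}. \<omega> (id i)"
  have P: "\<And>i. i \<in> UNIV \<Longrightarrow> prob_space (uniform_measure lborel {0..1::real})"
    by (intro prob_space_uniform_measure) auto
  have distr: "distr break_space ?U ?r = ?U"
    unfolding break_space_def using distr_PiM_reindex[OF P, where f=id and I="{..<n}"] by simp
  have r: "?r \<in> measurable break_space ?U"
    unfolding break_space_def by (simp add: measurable_restrict_subset)
  have "sets ?U = sets (lborel_Pi {..<n})"
    by (rule sets_PiM_cong) simp_all
  then have S': "S \<in> sets ?U"
    using S by simp
  have "emeasure break_space {\<omega> \<in> space break_space. restrict \<omega> {..<n} \<in> S}
      = emeasure (distr break_space ?U ?r) S"
    using emeasure_distr[OF r S'] by (simp add: vimage_def Int_def conj_commute)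
  also have "\<dots> \<le> emeasure (lborel_Pi {..<n}) S"
    unfolding distr by (rule emeasure_PiM_uniform_le[OF _ S]) simp
  finally show ?thesis .
qed

lemma AE_break_space_unit_interval: "AE \<omega> in break_space. \<forall>i. \<omega> i \<in> {0..1}"
proof -
  interpret product_prob_space "\<lambda>_::nat. uniform_measure lborel {0..1::real}" UNIV
    by (intro product_prob_spaceI prob_space_uniform_measure) auto
  have "AE \<omega> in break_space. \<omega> i \<in> {0..1}" for i
  proof -
    have distr: "distr break_space (uniform_measure lborel {0..1}) (\<lambda>\<omega>. \<omega> i) = uniform_measure lborel {0..1}"
      unfolding break_space_def by (rule PiM_component) simp
    have "AE x in distr break_space (uniform_measure lborel {0..1}) (\<lambda>\<omega>. \<omega> i). x \<in> {0..1::real}"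
      unfolding distr by (rule AE_uniform_measureI) auto
    then show ?thesis
      by (rule AE_distrD[rotated]) (simp add: break_space_def)
  qed
  then show ?thesis
    by (simp add: AE_all_countable)
qed

lemma stop_time_le_suminf_indicator:
  assumes "\<And>n. (\<And>m. m \<le> n \<Longrightarrow> \<not> has_triangle (seg_lengths \<omega> m)) \<Longrightarrow> \<omega> \<in> A n"
  shows "stop_time \<omega> \<le> (\<Sum>n. indicator (A n) \<omega>)"
proof -
  have count: "of_nat N \<le> (\<Sum>n. indicator (A n) \<omega> :: ennreal)" if "\<And>n. n < N \<Longrightarrow> \<omega> \<in> A n" for N
  proof -
    have "of_nat N = (\<Sum>n<N. indicator (A n) \<omega> :: ennreal)"
      using that by simp
    also have "\<dots> \<le> (\<Sum>n. indicator (A n) \<omega>)"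
      by (rule sum_le_suminf) simp_all
    finally show ?thesis .
  qed
  show ?thesis
  proof (cases "\<exists>n. has_triangle (seg_lengths \<omega> n)")
    case True
    define N where "N = (LEAST n. has_triangle (seg_lengths \<omega> n))"
    have "\<omega> \<in> A n" if "n < N" for n
    proof (rule assms)
      fix m assume "m \<le> n"
      then have "m < N"
        using that by simp
      then show "\<not> has_triangle (seg_lengths \<omega> m)"
        unfolding N_def by (rule not_less_Least)
    qed
    then show ?thesis
      using count True by (simp add: stop_time_def N_def)
  next
    case False
    then have "of_nat N \<le> (\<Sum>n. indicator (A n) \<omega> :: ennreal)" for N
      by (intro count assms) auto
    then have "(SUP N. of_nat N :: ennreal) \<le> (\<Sum>n. indicator (A n) \<omega>)"
      by (rule SUP_least)
    then show ?thesis
      by (simp add: ennreal_SUP_of_nat_eq_top top_unique)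
  qed
qed

theorem mainTheorem11:
  shows "(\<integral>\<^sup>+ \<omega>. stop_time \<omega> \<partial>break_space) \<le> ennreal 3.398"
proof -
  define A where "A n = {\<omega> \<in> space break_space. restrict \<omega> {..<n} \<in> no_triangle_cover n}" for n
  have A: "A n \<in> sets break_space" for n
    unfolding A_def by (rule sets_break_space_restrict[OF no_triangle_cover_sets])
  have "stop_time \<omega> \<le> (\<Sum>n. indicator (A n) \<omega>)" if "\<forall>i. \<omega> i \<in> {0..1}" for \<omega>
  proof (rule stop_time_le_suminf_indicator)
    fix n assume "\<And>m. m \<le> n \<Longrightarrow> \<not> has_triangle (seg_lengths \<omega> m)"
    then show "\<omega> \<in> A n"
      using restrict_mem_no_triangle_cover[of \<omega> n] that by (simp add: A_def space_break_space)
  qed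
  then have "(\<integral>\<^sup>+ \<omega>. stop_time \<omega> \<partial>break_space) \<le> (\<integral>\<^sup>+ \<omega>. (\<Sum>n. indicator (A n) \<omega>) \<partial>break_space)"
    by (intro nn_integral_mono_AE eventually_mono[OF AE_break_space_unit_interval])
  also have "\<dots> = (\<Sum>n. emeasure break_space (A n))"
    using A by (simp add: nn_integral_suminf)
  also have "\<dots> \<le> (\<Sum>n. ennreal (cover_bound n))"
  proof (intro suminf_le summableI)
    show "emeasure break_space (A n) \<le> ennreal (cover_bound n)" for n
      unfolding A_def using emeasure_break_space_restrict_le[OF no_triangle_cover_sets]
        emeasure_no_triangle_cover by (rule order_trans)
  qed
  also have "\<dots> \<le> ennreal 3.398"
    by (rule suminf_cover_bound)
  finally show ?thesis .
qed

end
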